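(* Let $n\ge3$, $l\ge1$, $\mathfrak g=A^{(2)}_{2n-1}$, $B$ the level-$l$ perfect crystal of the context, $\lambda=l\Lambda_0$, $d=2n-1$, and $i^{(j)}_1=i^{(j)}_{2n-1}=\epsilon(j+1)$, $i^{(j)}_a=i^{(j)}_{2n-a}=a$ for $2\le a\le n$. Then: (II) $B^{(j)}_d=B$ for all $j\ge1$; (III) $\langle\lambda_j,h_{i^{(j)}_a}\rangle\le\varepsilon_{i^{(j)}_a}(b)$ for all $j\ge1$, $1\le a\le d$, $b\in B^{(j)}_{a-1}$; (IV') for all $j\ge1$, $a=1,\dots,d$: $\varepsilon_{i^{(j)}_{a+1}}(b^{(j)}_a)=0$, $\varphi_{i^{(j)}_{a+1}}(b^{(j)}_a)>0$ (with $i^{(j)}_{d+1}:=i^{(j+1)}_1$), and $b^{(j+1)}_0=\tilde f_{i^{(j+1)}_1}^mb^{(j)}_d$ with $m=\langle\lambda_{j+1},h_{i^{(j+1)}_1}\rangle$. Moreover $B^{(j)}_0=\{(0,\dots,0,l)\}$ ($j$ odd), $\{(l,0,\dots,0)\}$ ($j$ even), $B^{(j)}_{2n-1}=B$, and for $1\le a\le n-1$: $B^{(j)}_a$ is the set of $b\in B$ with all coordinates $0$ except possibly $x_2,\dots,x_{a+1},\bar x_1$ ($j$ odd), resp. $x_1,\dots,x_{a+1}$ ($j$ even); $B^{(j)}_{n+a-1}$ is the set of $b\in B$ with all coordinates $0$ except possibly $x_2,\dots,x_n,\bar x_n,\dots,\bar x_{n-a+1},\bar x_1$ ($j$ odd),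 resp. $x_1,\dots,x_n,\bar x_n,\dots,\bar x_{n-a+1}$ ($j$ even). Also $b^{(j)}_0=(0,\dots,0,l)$ ($j$ odd), $(l,0,\dots,0)$ ($j$ even); $b^{(j)}_{2n-1}=(l,0,\dots,0)$ ($j$ odd), $(0,\dots,0,l)$ ($j$ even); and for $1\le a\le n-1$, $b^{(j)}_a$ has $x_{a+1}=l$ and $b^{(j)}_{n+a-1}$ has $\bar x_{n-a+1}=l$, all other coordinates $0$.
   Context: $\epsilon(i)=0$ for $i$ even and $1$ for $i$ odd; $(x)_+=\max(x,0)$. $B=\{(x_1,\dots,x_n,\bar x_n,\dots,\bar x_1)\in\mathbb Z^{2n}: x_i,\bar x_i\ge0,\ \sum_{i=1}^n(x_i+\bar x_i)=l\}$. Crystal structure: $\tilde f_0b=(x_1,x_2+1,\dots,\bar x_2,\bar x_1-1)$ if $x_2\ge\bar x_2$, $(x_1+1,x_2,\dots,\bar x_2-1,\bar x_1)$ if $x_2<\bar x_2$; for $1\le i\le n-1$, $\tilde f_ib$ replaces $(x_i,x_{i+1})$ by $(x_i-1,x_{i+1}+1)$ if $x_{i+1}\ge\bar x_{i+1}$, and $(\bar x_{i+1},\bar x_i)$ by $(\bar x_{i+1}-1,\bar x_i+1)$ if $x_{i+1}<\bar x_{i+1}$; $\tilde f_nb$ replaces $(x_n,\bar x_n)$ by $(x_n-1,\bar x_n+1)$; $\tilde e_ib=b'$ iff $\tilde f_ib'=b$; results outside $B$ mean $0$. $\varphi_0(b)=\bar x_1+(\bar x_2-x_2)_+$, $\varepsilon_0(b)=x_1+(x_2-\bar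 x_2)_+$; $\varphi_i(b)=x_i+(\bar x_{i+1}-x_{i+1})_+$, $\varepsilon_i(b)=\bar x_i+(x_{i+1}-\bar x_{i+1})_+$ ($1\le i\le n-1$); $\varphi_n(b)=x_n$, $\varepsilon_n(b)=\bar x_n$. For $\lambda=l\Lambda_0$: $\lambda_j=l\Lambda_{\epsilon(j)}$, $\overline b_j=(0,\dots,0,l)$ ($j$ odd), $(l,0,\dots,0)$ ($j$ even); $\langle\lambda_j,h_i\rangle$ is the coefficient of $\Lambda_i$ in $\lambda_j$. Given $d$, $i^{(j)}_a$: $B^{(j)}_0=\{\overline b_j\}$, $B^{(j)}_a=\bigcup_{n\ge0}\tilde f_{i^{(j)}_a}^nB^{(j)}_{a-1}\setminus\{0\}$; $b^{(j)}_0=\overline b_j$, $b^{(j)}_a=\tilde f_{i^{(j)}_a}^{\varphi_{i^{(j)}_a}(b^{(j)}_{a-1})}b^{(j)}_{a-1}$. *)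

theory Defs
  imports Main
begin

text \<open>An element b = (x_1,...,x_n, xbar_n,...,xbar_1) is an int list of length 2n:
  x_i is stored at position i-1, xbar_i at position 2n-i.\<close>

definition xc :: "int list \<Rightarrow> nat \<Rightarrow> int" where
  "xc b i = b ! (i - 1)"

definition xbc :: "nat \<Rightarrow> int list \<Rightarrow> nat \<Rightarrow> int" where
  "xbc n b i = b ! (2 * n - i)"

definition crysB :: "nat \<Rightarrow> nat \<Rightarrow> int list set" where
  "crysB n l = {b. length b = 2 * n \<and> (\<forall>k \<in> set b. 0 \<le> k) \<and> sum_list b = int l}"

definition par :: "nat \<Rightarrow> nat" where
  "par j = (if even j then 0 else 1)"

definition addx :: "int list \<Rightarrow> nat \<Rightarrow> int \<Rightarrow> int list" where
  "addx b i d = b[i - 1 := b ! (i - 1) + d]"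

definition addxb :: "nat \<Rightarrow> int list \<Rightarrow> nat \<Rightarrow> int \<Rightarrow> int list" where
  "addxb n b i d = b[2 * n - i := b ! (2 * n - i) + d]"

definition fraw :: "nat \<Rightarrow> nat \<Rightarrow> int list \<Rightarrow> int list" where
  "fraw n i b =
    (if i = 0 then
       (if xc b 2 \<ge> xbc n b 2 then addxb n (addx b 2 1) 1 (-1)
        else addxb n (addx b 1 1) 2 (-1))
     else if i < n then
       (if xc b (i+1) \<ge> xbc n b (i+1) then addx (addx b i (-1)) (i+1) 1
        else addxb n (addxb n b (i+1) (-1)) i 1)
     else addxb n (addx b n (-1)) n 1)"

text \<open>Kashiwara operator f_i; None represents 0 (result outside B, or i > n).\<close>
definition ftil :: "nat \<Rightarrow> nat \<Rightarrow> nat \<Rightarrow> int list \<Rightarrow> int list option" where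
  "ftil n l i b = (if i \<le> n \<and> fraw n i b \<in> crysB n l then Some (fraw n i b) else None)"

fun fpow :: "nat \<Rightarrow> nat \<Rightarrow> nat \<Rightarrow> nat \<Rightarrow> int list \<Rightarrow> int list option" where
  "fpow n l i 0 b = Some b"
| "fpow n l i (Suc k) b = Option.bind (fpow n l i k b) (ftil n l i)"

definition phi :: "nat \<Rightarrow> nat \<Rightarrow> int list \<Rightarrow> int" where
  "phi n i b =
    (if i = 0 then xbc n b 1 + max (xbc n b 2 - xc b 2) 0
     else if i < n then xc b i + max (xbc n b (i+1) - xc b (i+1)) 0
     else xc b n)"

definition eps :: "nat \<Rightarrow> nat \<Rightarrow> int list \<Rightarrow> int" where
  "eps n i b =
    (if i = 0 then xc b 1 + max (xc b 2 - xbc n b 2) 0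
     else if i < n then xbc n b i + max (xc b (i+1) - xbc n b (i+1)) 0
     else xbc n b n)"

definition bx :: "nat \<Rightarrow> nat \<Rightarrow> nat \<Rightarrow> int list" where
  "bx n l k = (replicate (2 * n) 0)[k - 1 := int l]"

definition bxb :: "nat \<Rightarrow> nat \<Rightarrow> nat \<Rightarrow> int list" where
  "bxb n l k = (replicate (2 * n) 0)[2 * n - k := int l]"

definition bbar :: "nat \<Rightarrow> nat \<Rightarrow> nat \<Rightarrow> int list" where
  "bbar n l j = (if odd j then bxb n l 1 else bx n l 1)"

text \<open><lambda_j, h_i> for lambda = l Lambda_0, lambda_j = l Lambda_{eps(j)}.\<close>
definition lamh :: "nat \<Rightarrow> nat \<Rightarrow> nat \<Rightarrow> int" where
  "lamh l j i = (if i = par j then int l else 0)"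

definition iseq :: "nat \<Rightarrow> nat \<Rightarrow> nat \<Rightarrow> nat" where
  "iseq n j a = (if a = 1 \<or> a = 2 * n - 1 then par (j + 1)
                 else if 2 \<le> a \<and> a \<le> n then a else 2 * n - a)"

definition inext :: "nat \<Rightarrow> nat \<Rightarrow> nat \<Rightarrow> nat" where
  "inext n j a = (if a = 2 * n - 1 then iseq n (j + 1) 1 else iseq n j (a + 1))"

fun Bset :: "nat \<Rightarrow> nat \<Rightarrow> nat \<Rightarrow> nat \<Rightarrow> int list set" where
  "Bset n l j 0 = {bbar n l j}"
| "Bset n l j (Suc a) =
     {b'. \<exists>b \<in> Bset n l j a. \<exists>k. fpow n l (iseq n j (Suc a)) k b = Some b'}"

fun bseq :: "nat \<Rightarrow> nat \<Rightarrow> nat \<Rightarrow> nat \<Rightarrow> int list option" where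
  "bseq n l j 0 = Some (bbar n l j)"
| "bseq n l j (Suc a) =
     Option.bind (bseq n l j a)
       (\<lambda>b. fpow n l (iseq n j (Suc a)) (nat (phi n (iseq n j (Suc a)) b)) b)"

end

theory Submission imports Defs begin

text \<open>Every Kashiwara operator f_i moves one unit of mass between two coordinates of b; for
  i < n the comparison of x_{i+1} with xbar_{i+1} decides which of two moves is made. Hence
  B^(j)_a consists of all b supported on a set of coordinates that grows by one coordinate q at
  each step: applying f_i repeatedly fills q, and conversely every element supported on the larger
  set is reached, because undoing a move yields a preimage of smaller measure (the mass at q plus
  the excess that would force the other move). Along the path, b^(j)_a carries all its mass l at
  one coordinate; phi of the next operator is l, so the whole mass is moved to the next
  coordinate, and eps and phi there are read off directly.\<close>

lemma sum_list_list_update: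
  fixes xs :: "'a::ab_group_add list"
  shows "k < length xs \<Longrightarrow> sum_list (xs[k := x]) = sum_list xs + x - xs ! k"
  by (induction xs arbitrary: k) (auto split: nat.splits)

lemma crysB_iff:
  "b \<in> crysB n l \<longleftrightarrow> length b = 2*n \<and> (\<forall>r<2*n. 0 \<le> b!r) \<and> sum_list b = int l"
  unfolding crysB_def by (auto simp: all_set_conv_all_nth)

section \<open>Moving one unit of mass\<close>

definition move :: "int list \<Rightarrow> nat \<Rightarrow> nat \<Rightarrow> int list" where
  "move b p q = b[p := b!p - 1, q := b!q + 1]"

lemma length_move [simp]: "length (move b p q) = length b"
  by (simp add: move_def)

lemma nth_move:
  "p < length b \<Longrightarrow> q < length b \<Longrightarrow> p \<noteq> q \<Longrightarrow>
   move b p q ! r = (if r = p then b!p - 1 else if r = q then b!q + 1 else b!r)"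
  by (simp add: move_def nth_list_update)

lemma move_move_inverse:
  "p < length b \<Longrightarrow> q < length b \<Longrightarrow> p \<noteq> q \<Longrightarrow> move (move b q p) p q = b"
  by (auto intro!: nth_equalityI simp: nth_move)

lemma move_in_crysB_iff:
  assumes b: "b \<in> crysB n l" and pq: "p < 2*n" "q < 2*n" "p \<noteq> q"
  shows "move b p q \<in> crysB n l \<longleftrightarrow> 0 < b!p"
proof -
  have "length b = 2*n" "\<forall>r<2*n. 0 \<le> b!r" "sum_list b = int l"
    using b by (auto simp: crysB_iff)
  moreover have "sum_list (move b p q) = sum_list b"
    using pq \<open>length b = 2*n\<close> by (simp add: move_def sum_list_list_update nth_list_update)
  ultimately show ?thesis
    using pq by (auto simp: crysB_iff nth_move)
qed

lemma fraw_0: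
  assumes "length b = 2*n" "n \<ge> 2"
  shows "fraw n 0 b = (if b!(2*n-2) \<le> b!1 then move b (2*n-1) 1 else move b (2*n-2) 0)"
  using assms unfolding fraw_def addx_def addxb_def xc_def xbc_def move_def
  by (auto intro!: nth_equalityI simp: nth_list_update)

lemma fraw_less:
  assumes "length b = 2*n" "0 < i" "i < n"
  shows "fraw n i b = (if b!(2*n-i-1) \<le> b!i then move b (i-1) i else move b (2*n-i-1) (2*n-i))"
  using assms unfolding fraw_def addx_def addxb_def xc_def xbc_def move_def
  by (auto intro!: nth_equalityI simp: nth_list_update)

lemma fraw_n:
  assumes "length b = 2*n" "n \<ge> 1"
  shows "fraw n n b = move b (n-1) n"
  using assms unfolding fraw_def addx_def addxb_def xc_def xbc_def move_def
  by (auto intro!: nth_equalityI simp: nth_list_update)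

lemma phi_nth: "phi n i b = (if i = 0 then b!(2*n-1) + max (b!(2*n-2) - b!1) 0
   else if i < n then b!(i-1) + max (b!(2*n-i-1) - b!i) 0 else b!(n-1))"
  by (simp add: phi_def xc_def xbc_def)

lemma eps_nth: "eps n i b = (if i = 0 then b!0 + max (b!1 - b!(2*n-2)) 0
   else if i < n then b!(2*n-i) + max (b!i - b!(2*n-i-1)) 0 else b!n)"
  by (simp add: eps_def xc_def xbc_def)

lemma eps_nonneg: "b \<in> crysB n l \<Longrightarrow> n \<ge> 1 \<Longrightarrow> 0 \<le> eps n i b"
  by (auto simp: eps_nth crysB_iff)

lemma ftil_move:
  assumes "i \<le> n" "b \<in> crysB n l" "p < 2*n" "q < 2*n" "p \<noteq> q" "fraw n i b = move b p q"
  shows "ftil n l i b = (if 0 < b!p then Some (move b p q) else None)"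
  using assms move_in_crysB_iff[of b n l p q] by (simp add: ftil_def)

section \<open>Elements supported on a set of positions\<close>

definition supported :: "nat \<Rightarrow> nat \<Rightarrow> nat set \<Rightarrow> int list set" where
  "supported n l A = {b \<in> crysB n l. \<forall>r<2*n. b!r \<noteq> 0 \<longrightarrow> r \<in> A}"

lemma supported_crysB: "b \<in> supported n l A \<Longrightarrow> b \<in> crysB n l"
  by (simp add: supported_def)

lemma supported_length: "b \<in> supported n l A \<Longrightarrow> length b = 2*n"
  by (simp add: supported_def crysB_iff)

lemma supported_nonneg: "b \<in> supported n l A \<Longrightarrow> r < 2*n \<Longrightarrow> 0 \<le> b!r"
  by (simp add: supported_def crysB_iff)

lemma supported_outside: "b \<in> supported n l A \<Longrightarrow> r < 2*n \<Longrightarrow> r \<notin> A \<Longrightarrow> b!r = 0"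
  by (auto simp: supported_def)

lemma supported_mono: "A \<subseteq> A' \<Longrightarrow> supported n l A \<subseteq> supported n l A'"
  by (auto simp: supported_def)

lemma supported_UNIV: "supported n l {..<2*n} = crysB n l"
  by (auto simp: supported_def)

lemma not_supported_insert:
  assumes "b \<in> supported n l (insert q A)" "b \<notin> supported n l A"
  shows "0 < b!q"
proof -
  obtain r where r: "r < 2*n" "b!r \<noteq> 0" "r \<notin> A"
    using assms by (auto simp: supported_def)
  then have "r = q"
    using assms(1) by (auto simp: supported_def)
  with r supported_nonneg[OF assms(1) r(1)] show ?thesis by simp
qed

lemma move_in_supported:
  assumes "b \<in> supported n l A" "p < 2*n" "q < 2*n" "p \<noteq> q" "0 < b!p" "q \<in> A"
  shows "move b p q \<in> supported n l A"
  using assms move_in_crysB_iff[OF supported_crysB[OF assms(1)] assms(2-4)]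
  by (auto simp: supported_def nth_move supported_length[OF assms(1)])

definition concentrated :: "nat \<Rightarrow> nat \<Rightarrow> nat \<Rightarrow> int list" where
  "concentrated n l p = (replicate (2*n) 0)[p := int l]"

lemma length_concentrated [simp]: "length (concentrated n l p) = 2*n"
  by (simp add: concentrated_def)

lemma nth_concentrated: "r < 2*n \<Longrightarrow> concentrated n l p ! r = (if r = p then int l else 0)"
  by (simp add: concentrated_def nth_list_update)

lemma supported_singleton:
  assumes p: "p < 2*n"
  shows "supported n l {p} = {concentrated n l p}"
proof
  have "sum_list (concentrated n l p) = int l"
    using p by (simp add: concentrated_def sum_list_list_update sum_list_replicate)
  then show "{concentrated n l p} \<subseteq> supported n l {p}"
    using p by (simp add: supported_def crysB_iff nth_concentrated)
next
  show "supported n l {p} \<subseteq> {concentrated n l p}"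
  proof
    fix b assume b: "b \<in> supported n l {p}"
    then have b_eq: "b = (replicate (2*n) 0)[p := b!p]"
      using p supported_outside[OF b] by (auto intro!: nth_equalityI simp: nth_list_update supported_length)
    have "int l = sum_list b"
      using supported_crysB[OF b] by (simp add: crysB_iff)
    also have "\<dots> = b!p"
      using p by (subst b_eq) (simp add: sum_list_list_update sum_list_replicate)
    finally show "b \<in> {concentrated n l p}"
      using b_eq by (simp add: concentrated_def)
  qed
qed

section \<open>Orbits under a Kashiwara operator\<close>

definition orbit :: "nat \<Rightarrow> nat \<Rightarrow> nat \<Rightarrow> int list set \<Rightarrow> int list set" where
  "orbit n l i S = {c. \<exists>b\<in>S. \<exists>k. fpow n l i k b = Some c}"

lemma Bset_Suc: "Bset n l j (Suc a) = orbit n l (iseq n j (Suc a)) (Bset n l j a)"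
  by (simp add: orbit_def)

text \<open>Descending along preimages of smaller measure must end in S.\<close>

lemma orbit_eqI:
  fixes \<mu> :: "int list \<Rightarrow> nat"
  assumes "S \<subseteq> T"
    and closed: "\<And>b c. b \<in> T \<Longrightarrow> ftil n l i b = Some c \<Longrightarrow> c \<in> T"
    and preimage: "\<And>b. b \<in> T \<Longrightarrow> b \<notin> S \<Longrightarrow> \<exists>b'\<in>T. ftil n l i b' = Some b \<and> \<mu> b' < \<mu> b"
  shows "orbit n l i S = T"
proof
  have "c \<in> T" if "b \<in> S" "fpow n l i k b = Some c" for b c k
    using that(2)
  proof (induction k arbitrary: c)
    case 0
    then show ?case using that(1) \<open>S \<subseteq> T\<close> by auto
  next
    case (Suc k)
    then obtain d where "fpow n l i k b = Some d" "ftil n l i d = Some c"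
      by (cases "fpow n l i k b") auto
    then show ?case using Suc.IH closed by blast
  qed
  then show "orbit n l i S \<subseteq> T"
    by (auto simp: orbit_def)
next
  have "b \<in> orbit n l i S" if "b \<in> T" for b
    using that
  proof (induction "\<mu> b" arbitrary: b rule: less_induct)
    case less
    show ?case
    proof (cases "b \<in> S")
      case True
      then show ?thesis by (force simp: orbit_def intro: exI[of _ 0])
    next
      case False
      then obtain b' where b': "b' \<in> T" "ftil n l i b' = Some b" "\<mu> b' < \<mu> b"
        using preimage less.prems by blast
      then obtain b0 k where "b0 \<in> S" "fpow n l i k b0 = Some b'"
        using less.hyps[OF b'(3,1)] by (auto simp: orbit_def)
      with b' show ?thesis
        by (auto simp: orbit_def intro!: bexI[of _ b0] exI[of _ "Suc k"])
    qed
  qed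
  then show "T \<subseteq> orbit n l i S" by blast
qed

text \<open>The two ways in which f_i adds a new position q to a support A.\<close>

definition single_transfer :: "nat \<Rightarrow> nat \<Rightarrow> nat \<Rightarrow> nat set \<Rightarrow> nat \<Rightarrow> nat \<Rightarrow> bool" where
  "single_transfer n l i A p q \<longleftrightarrow> i \<le> n \<and> insert q A \<subseteq> {..<2*n} \<and> p \<in> A \<and> p \<noteq> q \<and>
     (\<forall>b \<in> supported n l (insert q A). fraw n i b = move b p q)"

definition double_transfer :: "nat \<Rightarrow> nat \<Rightarrow> nat \<Rightarrow> nat set \<Rightarrow> nat \<Rightarrow> nat \<Rightarrow> bool" where
  "double_transfer n l i A p q \<longleftrightarrow> i \<le> n \<and> insert q A \<subseteq> {..<2*n} \<and>
     (\<exists>p' q'. {p', q', p} \<subseteq> A \<and> distinct [p', q', p, q] \<and>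
       (\<forall>b \<in> supported n l (insert q A).
          fraw n i b = (if b!p \<le> b!q' then move b p' q' else move b p q)))"

lemma double_transferI:
  assumes "i \<le> n" "insert q A \<subseteq> {..<2*n}" "{p', q', p} \<subseteq> A" "distinct [p', q', p, q]"
    and "\<And>b. b \<in> supported n l (insert q A) \<Longrightarrow>
           fraw n i b = (if b!p \<le> b!q' then move b p' q' else move b p q)"
  shows "double_transfer n l i A p q"
  unfolding double_transfer_def using assms by blast

lemma orbit_single_transfer:
  assumes "single_transfer n l i A p q"
  shows "orbit n l i (supported n l A) = supported n l (insert q A)"
proof -
  have i: "i \<le> n" and pq: "p < 2*n" "q < 2*n" "p \<noteq> q" "p \<in> A"
    and f: "\<And>b. b \<in> supported n l (insert q A) \<Longrightarrow> fraw n i b = move b p q"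
    using assms by (auto simp: single_transfer_def)
  have ft: "ftil n l i b = (if 0 < b!p then Some (move b p q) else None)"
    if "b \<in> supported n l (insert q A)" for b
    using ftil_move[OF i supported_crysB[OF that] pq(1-3) f[OF that]] .
  show ?thesis
  proof (rule orbit_eqI[where \<mu> = "\<lambda>b. nat (b!q)"])
    show "supported n l A \<subseteq> supported n l (insert q A)"
      by (rule supported_mono) auto
  next
    fix b c assume "b \<in> supported n l (insert q A)" "ftil n l i b = Some c"
    then show "c \<in> supported n l (insert q A)"
      using ft move_in_supported pq by (auto split: if_splits)
  next
    fix b assume b: "b \<in> supported n l (insert q A)" "b \<notin> supported n l A"
    have L: "length b = 2*n" using supported_length[OF b(1)] .
    have "0 < b!q" using not_supported_insert[OF b] .
    then have b': "move b q p \<in> supported n l (insert q A)"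
      using move_in_supported[OF b(1)] pq by auto
    moreover have "ftil n l i (move b q p) = Some b"
      using ft[OF b'] supported_nonneg[OF b(1)] pq L by (simp add: nth_move move_move_inverse)
    moreover have "nat (move b q p ! q) < nat (b!q)"
      using \<open>0 < b!q\<close> pq L by (simp add: nth_move)
    ultimately show "\<exists>b'\<in>supported n l (insert q A). ftil n l i b' = Some b \<and> nat (b'!q) < nat (b!q)"
      by blast
  qed
qed

text \<open>The measure counts the units still to be moved to q, plus the excess at q' that forces
  the first move before the second becomes available.\<close>

lemma orbit_double_transfer:
  assumes "double_transfer n l i A p q"
  shows "orbit n l i (supported n l A) = supported n l (insert q A)"
proof -
  obtain p' q' where i: "i \<le> n" and A: "insert q A \<subseteq> {..<2*n}" "{p', q', p} \<subseteq> A"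
    and d: "distinct [p', q', p, q]"
    and f: "\<And>b. b \<in> supported n l (insert q A) \<Longrightarrow>
              fraw n i b = (if b!p \<le> b!q' then move b p' q' else move b p q)"
    using assms by (auto simp: double_transfer_def)
  have lt: "p' < 2*n" "q' < 2*n" "p < 2*n" "q < 2*n" using A by auto
  have ft: "ftil n l i b = (if b!p \<le> b!q' then (if 0 < b!p' then Some (move b p' q') else None)
                             else (if 0 < b!p then Some (move b p q) else None))"
    if "b \<in> supported n l (insert q A)" for b
    using f[OF that] ftil_move[OF i supported_crysB[OF that], of p' q']
      ftil_move[OF i supported_crysB[OF that], of p q] lt d by auto
  define \<mu> where "\<mu> b = nat (b!q + max (b!q' - b!p) 0)" for b
  show ?thesis
  proof (rule orbit_eqI[where \<mu> = \<mu>])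
    show "supported n l A \<subseteq> supported n l (insert q A)"
      by (rule supported_mono) auto
  next
    fix b c assume "b \<in> supported n l (insert q A)" "ftil n l i b = Some c"
    then show "c \<in> supported n l (insert q A)"
      using ft move_in_supported lt d A by (auto split: if_splits)
  next
    fix b assume b: "b \<in> supported n l (insert q A)" "b \<notin> supported n l A"
    have L: "length b = 2*n" using supported_length[OF b(1)] .
    have q: "0 < b!q" using not_supported_insert[OF b] .
    have nn: "0 \<le> b!p'" "0 \<le> b!p" using supported_nonneg[OF b(1)] lt by auto
    show "\<exists>b'\<in>supported n l (insert q A). ftil n l i b' = Some b \<and> \<mu> b' < \<mu> b"
    proof (cases "b!p < b!q'")
      case True
      then have b': "move b q' p' \<in> supported n l (insert q A)"
        using move_in_supported[OF b(1)] nn lt d A by auto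
      have "ftil n l i (move b q' p') = Some b"
        using ft[OF b'] True nn lt d L by (simp add: nth_move move_move_inverse)
      moreover have "\<mu> (move b q' p') < \<mu> b"
        using True q lt d L by (simp add: \<mu>_def nth_move)
      ultimately show ?thesis using b' by blast
    next
      case False
      then have b': "move b q p \<in> supported n l (insert q A)"
        using move_in_supported[OF b(1)] q lt d A by auto
      have "ftil n l i (move b q p) = Some b"
        using ft[OF b'] False nn lt d L by (simp add: nth_move move_move_inverse)
      moreover have "\<mu> (move b q p) < \<mu> b"
        using False q lt d L by (simp add: \<mu>_def nth_move)
      ultimately show ?thesis using b' by blast
    qed
  qed
qed

lemma ftil_transfer_from_source:
  assumes T: "single_transfer n l i A p q \<or> double_transfer n l i A p q"
    and b: "b \<in> supported n l {p, q}" "0 < b!p"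
  shows "ftil n l i b = Some (move b p q)"
  using T
proof
  assume "single_transfer n l i A p q"
  then have i: "i \<le> n" and A: "insert q A \<subseteq> {..<2*n}" "p \<in> A" "p \<noteq> q"
    and f: "\<And>b. b \<in> supported n l (insert q A) \<Longrightarrow> fraw n i b = move b p q"
    by (auto simp: single_transfer_def)
  have b': "b \<in> supported n l (insert q A)"
    using b(1) supported_mono[of "{p, q}" "insert q A" n l] A by auto
  then show ?thesis
    using b(2) f[OF b'] ftil_move[OF i supported_crysB[OF b'], of p q] A by auto
next
  assume "double_transfer n l i A p q"
  then obtain p' q' where i: "i \<le> n" and A: "insert q A \<subseteq> {..<2*n}" "{p', q', p} \<subseteq> A"
    and d: "distinct [p', q', p, q]"
    and f: "\<And>b. b \<in> supported n l (insert q A) \<Longrightarrow>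
              fraw n i b = (if b!p \<le> b!q' then move b p' q' else move b p q)"
    by (auto simp: double_transfer_def)
  have b': "b \<in> supported n l (insert q A)"
    using b(1) supported_mono[of "{p, q}" "insert q A" n l] A by auto
  moreover have "b!q' = 0"
    using supported_outside[OF b(1), of q'] A d by auto
  ultimately show ?thesis
    using b(2) f[OF b'] ftil_move[OF i supported_crysB[OF b'], of p q] A d by auto
qed

lemma fpow_concentrated_transfer:
  assumes T: "single_transfer n l i A p q \<or> double_transfer n l i A p q"
  shows "fpow n l i l (concentrated n l p) = Some (concentrated n l q)"
proof -
  have pq: "p < 2*n" "q < 2*n" "p \<noteq> q"
    using T by (auto simp: single_transfer_def double_transfer_def)
  define w where "w t = (concentrated n l p)[p := int l - int t, q := int t]" for t
  have w_nth: "w t ! r = (if r = q then int t else if r = p then int l - int t else 0)"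
    if "r < 2*n" for t r
    using that pq by (simp add: w_def nth_list_update nth_concentrated)
  have w_length: "length (w t) = 2*n" for t
    by (simp add: w_def)
  have "fpow n l i t (concentrated n l p) = Some (w t) \<and> w t \<in> supported n l {p, q}"
    if "t \<le> l" for t
    using that
  proof (induction t)
    case 0
    have "w 0 = concentrated n l p"
      using pq by (auto intro!: nth_equalityI simp: w_length w_nth nth_concentrated)
    then show ?case
      using supported_singleton[OF pq(1), of l] supported_mono[of "{p}" "{p, q}" n l] by auto
  next
    case (Suc t)
    then have w: "fpow n l i t (concentrated n l p) = Some (w t)" "w t \<in> supported n l {p, q}"
      by auto
    have "0 < w t ! p"
      using Suc.prems pq by (simp add: w_nth)
    moreover have "move (w t) p q = w (Suc t)"
      using pq by (auto intro!: nth_equalityI simp: nth_move w_nth w_length)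
    ultimately show ?case
      using w ftil_transfer_from_source[OF T w(2)] move_in_supported[OF w(2), of p q] pq by auto
  qed
  moreover have "w l = concentrated n l q"
    using pq by (auto intro!: nth_equalityI simp: w_nth nth_concentrated w_length)
  ultimately show ?thesis by auto
qed

section \<open>The stages B_a and the path b_a\<close>

text \<open>B^(j)_a is the set of elements supported on the positions support_stage n j a, and
  b^(j)_a carries all its mass at position path_pos n j a.\<close>

definition support_stage :: "nat \<Rightarrow> nat \<Rightarrow> nat \<Rightarrow> nat set" where
  "support_stage n j a = (if even j \<or> 2*n-1 \<le> a then {..a} else {1..a} \<union> {2*n-1})"

definition path_pos :: "nat \<Rightarrow> nat \<Rightarrow> nat \<Rightarrow> nat" where
  "path_pos n j a = (if a = 0 then (if odd j then 2*n-1 else 0)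
     else if a = 2*n-1 then (if odd j then 0 else 2*n-1) else a)"

lemma step_cases:
  assumes "n \<ge> 3" "Suc a \<le> 2*n-1"
  obtains (rise) "Suc a < n" "even j \<or> a \<noteq> 0" "iseq n j (Suc a) = Suc a"
  | (top) "Suc a = n" "iseq n j (Suc a) = n"
  | (first) "odd j" "a = 0" "iseq n j (Suc a) = 0"
  | (fall) "n < Suc a" "even j \<or> Suc a < 2*n-1" "iseq n j (Suc a) = 2*n - Suc a"
  | (last) "odd j" "Suc a = 2*n-1" "iseq n j (Suc a) = 0"
proof -
  have iseq: "iseq n j (Suc a) =
      (if odd j \<and> (a = 0 \<or> Suc a = 2*n-1) then 0 else if Suc a \<le> n then Suc a else 2*n - Suc a)"
    using assms by (auto simp: iseq_def par_def)
  consider "odd j" "a = 0" | "odd j" "Suc a = 2*n-1" | "Suc a = n"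
    | "\<not> (odd j \<and> (a = 0 \<or> Suc a = 2*n-1))" "Suc a < n"
    | "\<not> (odd j \<and> (a = 0 \<or> Suc a = 2*n-1))" "n < Suc a"
    by linarith
  then show thesis
  proof cases
    case 1
    then show ?thesis using first iseq by simp
  next
    case 2
    then show ?thesis using last iseq by simp
  next
    case 3
    moreover have "iseq n j (Suc a) = n"
      using 3 iseq assms by auto
    ultimately show ?thesis using top by simp
  next
    case 4
    then show ?thesis using rise iseq by auto
  next
    case 5
    then show ?thesis using fall iseq assms by auto
  qed
qed

lemma support_stage_Suc:
  assumes "n \<ge> 3" "Suc a \<le> 2*n-1"
  shows "support_stage n j (Suc a) = insert (path_pos n j (Suc a)) (support_stage n j a)"
  using assms by (cases rule: step_cases) (auto simp: support_stage_def path_pos_def)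

lemma eps_phi_step:
  assumes "n \<ge> 3" "Suc a \<le> 2*n-1"
  shows "eps n (iseq n j (Suc a)) (concentrated n l (path_pos n j a)) = 0 \<and>
         phi n (iseq n j (Suc a)) (concentrated n l (path_pos n j a)) = int l"
  using assms
proof (cases rule: step_cases[where j = j])
  case rise
  then have "path_pos n j a = a" by (auto simp: path_pos_def)
  moreover have "2*n - Suc a - 1 \<noteq> a" "2*n - Suc a \<noteq> a" using rise by auto
  ultimately show ?thesis using rise assms by (simp add: eps_nth phi_nth nth_concentrated)
next
  case top
  then have "path_pos n j a = n - 1" using assms by (auto simp: path_pos_def)
  moreover have "n \<noteq> n - 1" using assms by auto
  ultimately show ?thesis using top assms by (simp add: eps_nth phi_nth nth_concentrated)
next
  case first
  then have "path_pos n j a = 2*n - 1" by (auto simp: path_pos_def)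
  moreover have "2*n - 2 \<noteq> 2*n - 1" "1 \<noteq> 2*n - 1" using assms by auto
  ultimately show ?thesis using first assms by (simp add: eps_nth phi_nth nth_concentrated)
next
  case fall
  then have "path_pos n j a = a" using assms by (auto simp: path_pos_def)
  moreover have "2*n - (2*n - Suc a) - 1 = a" "2*n - (2*n - Suc a) \<noteq> a"
    "2*n - Suc a \<noteq> a" "2*n - Suc a - 1 \<noteq> a" "0 < 2*n - Suc a" "2*n - Suc a < n"
    using fall assms by auto
  ultimately show ?thesis using fall assms by (simp add: eps_nth phi_nth nth_concentrated)
next
  case last
  then have "path_pos n j a = 2*n - 2" using assms by (auto simp: path_pos_def)
  moreover have "2*n - 1 \<noteq> 2*n - 2" "1 \<noteq> 2*n - 2" "0 \<noteq> 2*n - 2" using assms by auto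
  ultimately show ?thesis using last assms by (simp add: eps_nth phi_nth nth_concentrated)
qed

lemma transfer_step:
  fixes n a j :: nat
  assumes "n \<ge> 3" "Suc a \<le> 2*n-1"
  defines "A \<equiv> support_stage n j a"
  shows "single_transfer n l (iseq n j (Suc a)) A (path_pos n j a) (path_pos n j (Suc a)) \<or>
         double_transfer n l (iseq n j (Suc a)) A (path_pos n j a) (path_pos n j (Suc a))"
  using assms(1,2)
proof (cases rule: step_cases[where j = j])
  case rise
  have pos: "path_pos n j a = a" "path_pos n j (Suc a) = Suc a"
    using rise by (auto simp: path_pos_def)
  have A: "insert (Suc a) A \<subseteq> {..<2*n}" "a \<in> A" "2*n - Suc a - 1 \<notin> insert (Suc a) A"
    using rise by (auto simp: A_def support_stage_def)
  have "fraw n (Suc a) b = move b a (Suc a)" if "b \<in> supported n l (insert (Suc a) A)" for b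
    using fraw_less[OF supported_length[OF that], of "Suc a"] A rise
      supported_outside[OF that, of "2*n - Suc a - 1"] supported_nonneg[OF that, of "Suc a"] by simp
  then show ?thesis
    using rise pos A by (simp add: single_transfer_def)
next
  case top
  have pos: "path_pos n j a = n - 1" "path_pos n j (Suc a) = n"
    using top assms by (auto simp: path_pos_def)
  have A: "insert n A \<subseteq> {..<2*n}" "n - 1 \<in> A" "n - 1 \<noteq> n"
    using top assms by (auto simp: A_def support_stage_def)
  have "fraw n n b = move b (n - 1) n" if "b \<in> supported n l (insert n A)" for b
    using fraw_n[OF supported_length[OF that]] assms by simp
  then show ?thesis
    using top pos A assms by (simp add: single_transfer_def)
next
  case first
  have pos: "path_pos n j a = 2*n - 1" "path_pos n j (Suc a) = 1"
    using first assms by (auto simp: path_pos_def)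
  have A: "insert 1 A \<subseteq> {..<2*n}" "2*n - 1 \<in> A" "2*n - 1 \<noteq> 1" "2*n - 2 \<notin> insert 1 A"
    using first assms by (auto simp: A_def support_stage_def)
  have "fraw n 0 b = move b (2*n - 1) 1" if "b \<in> supported n l (insert 1 A)" for b
    using fraw_0[OF supported_length[OF that]] A assms
      supported_outside[OF that, of "2*n - 2"] supported_nonneg[OF that, of 1] by simp
  then show ?thesis
    using first pos A assms by (simp add: single_transfer_def)
next
  case fall
  define i where "i = 2*n - Suc a"
  have i: "0 < i" "i < n" "2*n - i - 1 = a" "2*n - i = Suc a"
    using fall assms by (auto simp: i_def)
  have pos: "path_pos n j a = a" "path_pos n j (Suc a) = Suc a"
    using fall assms by (auto simp: path_pos_def)
  have A: "insert (Suc a) A \<subseteq> {..<2*n}" "{i - 1, i, a} \<subseteq> A" "distinct [i - 1, i, a, Suc a]"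
    using fall assms by (auto simp: A_def support_stage_def i_def)
  have fr: "fraw n i b = (if b!a \<le> b!i then move b (i - 1) i else move b a (Suc a))"
    if "b \<in> supported n l (insert (Suc a) A)" for b
    using fraw_less[OF supported_length[OF that] i(1,2)] i by simp
  have "double_transfer n l i A a (Suc a)"
    by (rule double_transferI[where p' = "i - 1" and q' = i]) (use A i(2) fr in auto)
  then show ?thesis
    using fall pos by (simp add: i_def)
next
  case last
  have pos: "path_pos n j a = 2*n - 2" "path_pos n j (Suc a) = 0"
    using last assms by (auto simp: path_pos_def)
  have A: "insert 0 A \<subseteq> {..<2*n}" "{2*n - 1, 1, 2*n - 2} \<subseteq> A" "distinct [2*n - 1, 1, 2*n - 2, 0]"
    using last assms by (auto simp: A_def support_stage_def)
  have fr: "fraw n 0 b = (if b!(2*n - 2) \<le> b!1 then move b (2*n - 1) 1 else move b (2*n - 2) 0)"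
    if "b \<in> supported n l (insert 0 A)" for b
    using fraw_0[OF supported_length[OF that]] assms by simp
  have "double_transfer n l 0 A (2*n - 2) 0"
    by (rule double_transferI[where p' = "2*n - 1" and q' = 1]) (use A fr in auto)
  then show ?thesis
    using last pos by simp
qed

lemma bbar_eq_concentrated: "bbar n l j = concentrated n l (path_pos n j 0)"
  by (simp add: bbar_def bxb_def bx_def concentrated_def path_pos_def)

lemma Bset_eq_supported:
  assumes "n \<ge> 3" "a \<le> 2*n-1"
  shows "Bset n l j a = supported n l (support_stage n j a)"
  using assms(2)
proof (induction a)
  case 0
  have "support_stage n j 0 = {path_pos n j 0}" "path_pos n j 0 < 2*n"
    using assms(1) by (auto simp: support_stage_def path_pos_def)
  then show ?case
    by (simp add: supported_singleton bbar_eq_concentrated)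
next
  case (Suc a)
  have "Bset n l j (Suc a) = orbit n l (iseq n j (Suc a)) (supported n l (support_stage n j a))"
    unfolding Bset_Suc using Suc by simp
  also have "\<dots> = supported n l (insert (path_pos n j (Suc a)) (support_stage n j a))"
    using transfer_step[OF assms(1) Suc.prems] orbit_single_transfer orbit_double_transfer by blast
  also have "\<dots> = supported n l (support_stage n j (Suc a))"
    using support_stage_Suc[OF assms(1) Suc.prems] by simp
  finally show ?case .
qed

lemma bseq_eq_concentrated:
  assumes "n \<ge> 3" "a \<le> 2*n-1"
  shows "bseq n l j a = Some (concentrated n l (path_pos n j a))"
  using assms(2)
proof (induction a)
  case 0
  then show ?case by (simp add: bbar_eq_concentrated)
next
  case (Suc a)
  let ?i = "iseq n j (Suc a)" and ?b = "concentrated n l (path_pos n j a)"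
  have "bseq n l j (Suc a) = fpow n l ?i (nat (phi n ?i ?b)) ?b"
    using Suc by simp
  also have "\<dots> = fpow n l ?i l ?b"
    using eps_phi_step[OF assms(1) Suc.prems] by simp
  also have "\<dots> = Some (concentrated n l (path_pos n j (Suc a)))"
    using fpow_concentrated_transfer transfer_step[OF assms(1) Suc.prems] by blast
  finally show ?case .
qed

lemma Bset_last: "n \<ge> 3 \<Longrightarrow> Bset n l j (2*n-1) = crysB n l"
  using Bset_eq_supported[of n "2*n-1" l j] supported_UNIV[of n l]
  by (simp add: support_stage_def lessThan_Suc_atMost[symmetric])

lemma lamh_iseq_eq_0: "1 \<le> a \<Longrightarrow> a \<le> 2*n-1 \<Longrightarrow> lamh l j (iseq n j a) = 0"
  by (auto simp: lamh_def iseq_def par_def)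

lemma lamh_le_eps_Bset:
  assumes "n \<ge> 3" "1 \<le> a" "a \<le> 2*n-1" "b \<in> Bset n l j (a - 1)"
  shows "lamh l j (iseq n j a) \<le> eps n (iseq n j a) b"
proof -
  have "b \<in> crysB n l"
    using assms Bset_eq_supported[of n "a - 1" l j] supported_crysB by auto
  then show ?thesis
    using assms eps_nonneg lamh_iseq_eq_0 by simp
qed

lemma path_pos_last: "n \<ge> 1 \<Longrightarrow> path_pos n j (2*n-1) = path_pos n (j+1) 0"
  by (simp add: path_pos_def)

lemma bseq_eps_phi_next:
  assumes "n \<ge> 3" "l \<ge> 1" "1 \<le> a" "a \<le> 2*n-1"
  shows "\<exists>c. bseq n l j a = Some c \<and> eps n (inext n j a) c = 0 \<and> phi n (inext n j a) c > 0"
proof (cases "a = 2*n-1")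
  case True
  then have "inext n j a = iseq n (j+1) (Suc 0)" "path_pos n j a = path_pos n (j+1) 0"
    using assms path_pos_last by (auto simp: inext_def)
  then show ?thesis
    using bseq_eq_concentrated[of n a l j] eps_phi_step[of n 0 "j+1" l] assms by auto
next
  case False
  then have "inext n j a = iseq n j (Suc a)"
    by (simp add: inext_def)
  then show ?thesis
    using bseq_eq_concentrated[of n a l j] eps_phi_step[of n a j l] assms False by auto
qed

lemma bseq_start_eq_bind_last:
  assumes "n \<ge> 3"
  shows "bseq n l (j + 1) 0 = Option.bind (bseq n l j (2*n-1))
           (fpow n l (iseq n (j + 1) 1) (nat (lamh l (j + 1) (iseq n (j + 1) 1))))"
  using assms bseq_eq_concentrated[of n "2*n-1" l j] path_pos_last[of n j] lamh_iseq_eq_0[of 1 n l "j+1"]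
  by (simp add: bbar_eq_concentrated)

lemma coordinates_eq_supported:
  assumes P: "\<And>k. k \<in> {1..n} \<Longrightarrow> P k \<longleftrightarrow> k - 1 \<in> A"
    and Q: "\<And>k. k \<in> {1..n} \<Longrightarrow> Q k \<longleftrightarrow> 2*n - k \<in> A"
  shows "{b \<in> crysB n l. \<forall>k\<in>{1..n}. (xc b k \<noteq> 0 \<longrightarrow> P k) \<and> (xbc n b k \<noteq> 0 \<longrightarrow> Q k)}
           = supported n l A"
proof -
  have "(\<forall>k\<in>{1..n}. (xc b k \<noteq> 0 \<longrightarrow> P k) \<and> (xbc n b k \<noteq> 0 \<longrightarrow> Q k)) \<longleftrightarrow>
        (\<forall>r<2*n. b!r \<noteq> 0 \<longrightarrow> r \<in> A)" for b
  proof
    assume H: "\<forall>k\<in>{1..n}. (xc b k \<noteq> 0 \<longrightarrow> P k) \<and> (xbc n b k \<noteq> 0 \<longrightarrow> Q k)"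
    show "\<forall>r<2*n. b!r \<noteq> 0 \<longrightarrow> r \<in> A"
    proof (intro allI impI)
      fix r assume r: "r < 2*n" "b!r \<noteq> 0"
      show "r \<in> A"
      proof (cases "r < n")
        case True
        then show ?thesis using H P[of "r+1"] r by (simp add: xc_def)
      next
        case False
        then have "2*n - (2*n - r) = r" "2*n - r \<in> {1..n}" using r by auto
        then show ?thesis using H Q[of "2*n - r"] r by (auto simp: xbc_def)
      qed
    qed
  next
    assume "\<forall>r<2*n. b!r \<noteq> 0 \<longrightarrow> r \<in> A"
    then show "\<forall>k\<in>{1..n}. (xc b k \<noteq> 0 \<longrightarrow> P k) \<and> (xbc n b k \<noteq> 0 \<longrightarrow> Q k)"
      using P Q by (auto simp: xc_def xbc_def)
  qed
  then show ?thesis by (auto simp: supported_def)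
qed

lemma Bset_lower_coordinates:
  assumes "n \<ge> 3" "1 \<le> a" "a \<le> n - 1"
  shows "Bset n l j a = {b \<in> crysB n l.
           (\<forall>k \<in> {1..n}. (xc b k \<noteq> 0 \<longrightarrow> (if odd j then 2 \<le> k \<and> k \<le> a + 1 else k \<le> a + 1))
                       \<and> (xbc n b k \<noteq> 0 \<longrightarrow> odd j \<and> k = 1))}"
proof -
  have "{b \<in> crysB n l.
           (\<forall>k \<in> {1..n}. (xc b k \<noteq> 0 \<longrightarrow> (if odd j then 2 \<le> k \<and> k \<le> a + 1 else k \<le> a + 1))
                       \<and> (xbc n b k \<noteq> 0 \<longrightarrow> odd j \<and> k = 1))} = supported n l (support_stage n j a)"
    by (rule coordinates_eq_supported) (use assms in \<open>auto simp: support_stage_def\<close>)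
  then show ?thesis
    using assms Bset_eq_supported[of n a l j] by simp
qed

lemma Bset_upper_coordinates:
  assumes "n \<ge> 3" "1 \<le> a" "a \<le> n - 1"
  shows "Bset n l j (n + a - 1) = {b \<in> crysB n l.
           (\<forall>k \<in> {1..n}. (xc b k \<noteq> 0 \<longrightarrow> (if odd j then 2 \<le> k else True))
                       \<and> (xbc n b k \<noteq> 0 \<longrightarrow> (n - a + 1 \<le> k \<or> (odd j \<and> k = 1))))}"
proof -
  have "{b \<in> crysB n l.
           (\<forall>k \<in> {1..n}. (xc b k \<noteq> 0 \<longrightarrow> (if odd j then 2 \<le> k else True))
                       \<and> (xbc n b k \<noteq> 0 \<longrightarrow> (n - a + 1 \<le> k \<or> (odd j \<and> k = 1))))}
          = supported n l (support_stage n j (n + a - 1))"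
    by (rule coordinates_eq_supported) (use assms in \<open>auto simp: support_stage_def\<close>)
  then show ?thesis
    using assms Bset_eq_supported[of n "n + a - 1" l j] by simp
qed

lemma bx_eq_concentrated: "bx n l k = concentrated n l (k - 1)"
  by (simp add: bx_def concentrated_def)

lemma bxb_eq_concentrated: "bxb n l k = concentrated n l (2*n - k)"
  by (simp add: bxb_def concentrated_def)

lemma bseq_last:
  "n \<ge> 3 \<Longrightarrow> bseq n l j (2*n-1) = Some (if odd j then bx n l 1 else bxb n l 1)"
  using bseq_eq_concentrated[of n "2*n-1" l j]
  by (simp add: path_pos_def bx_eq_concentrated bxb_eq_concentrated)

lemma bseq_middle:
  assumes "n \<ge> 3" "1 \<le> a" "a \<le> n - 1"
  shows "bseq n l j a = Some (bx n l (a + 1))"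
    and "bseq n l j (n + a - 1) = Some (bxb n l (n - a + 1))"
proof -
  have "path_pos n j a = a" "path_pos n j (n + a - 1) = n + a - 1" "2*n - (n - a + 1) = n + a - 1"
    using assms by (auto simp: path_pos_def)
  then show "bseq n l j a = Some (bx n l (a + 1))"
    and "bseq n l j (n + a - 1) = Some (bxb n l (n - a + 1))"
    using assms bseq_eq_concentrated[of n a l j] bseq_eq_concentrated[of n "n + a - 1" l j]
    by (simp_all add: bx_eq_concentrated bxb_eq_concentrated)
qed

theorem mainTheorem5:
  fixes n l :: nat
  assumes "n \<ge> 3" and "l \<ge> 1"
  shows
    "(\<forall>j\<ge>1. Bset n l j (2 * n - 1) = crysB n l)
   \<and> (\<forall>j\<ge>1. \<forall>a. 1 \<le> a \<and> a \<le> 2 * n - 1 \<longrightarrow>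
        (\<forall>b \<in> Bset n l j (a - 1). lamh l j (iseq n j a) \<le> eps n (iseq n j a) b))
   \<and> (\<forall>j\<ge>1. \<forall>a. 1 \<le> a \<and> a \<le> 2 * n - 1 \<longrightarrow>
        (\<exists>c. bseq n l j a = Some c \<and> eps n (inext n j a) c = 0 \<and> phi n (inext n j a) c > 0))
   \<and> (\<forall>j\<ge>1. bseq n l (j + 1) 0 =
        Option.bind (bseq n l j (2 * n - 1))
          (fpow n l (iseq n (j + 1) 1) (nat (lamh l (j + 1) (iseq n (j + 1) 1)))))
   \<and> (\<forall>j\<ge>1. Bset n l j 0 = (if odd j then {bxb n l 1} else {bx n l 1}))
   \<and> (\<forall>j\<ge>1. \<forall>a. 1 \<le> a \<and> a \<le> n - 1 \<longrightarrow>
        Bset n l j a = {b \<in> crysB n l.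
          (\<forall>k \<in> {1..n}. (xc b k \<noteq> 0 \<longrightarrow> (if odd j then 2 \<le> k \<and> k \<le> a + 1 else k \<le> a + 1))
                      \<and> (xbc n b k \<noteq> 0 \<longrightarrow> odd j \<and> k = 1))})
   \<and> (\<forall>j\<ge>1. \<forall>a. 1 \<le> a \<and> a \<le> n - 1 \<longrightarrow>
        Bset n l j (n + a - 1) = {b \<in> crysB n l.
          (\<forall>k \<in> {1..n}. (xc b k \<noteq> 0 \<longrightarrow> (if odd j then 2 \<le> k else True))
                      \<and> (xbc n b k \<noteq> 0 \<longrightarrow> (n - a + 1 \<le> k \<or> (odd j \<and> k = 1))))})
   \<and> (\<forall>j\<ge>1. bseq n l j 0 = Some (if odd j then bxb n l 1 else bx n l 1))
   \<and> (\<forall>j\<ge>1. bseq n l j (2 * n - 1) = Some (if odd j then bx n l 1 else bxb n l 1))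
   \<and> (\<forall>j\<ge>1. \<forall>a. 1 \<le> a \<and> a \<le> n - 1 \<longrightarrow>
        bseq n l j a = Some (bx n l (a + 1)) \<and>
        bseq n l j (n + a - 1) = Some (bxb n l (n - a + 1)))"
  using Bset_last[OF assms(1)] lamh_le_eps_Bset[OF assms(1)] bseq_eps_phi_next[OF assms]
    bseq_start_eq_bind_last[OF assms(1)] Bset_lower_coordinates[OF assms(1)] Bset_upper_coordinates[OF assms(1)]
    bseq_last[OF assms(1)] bseq_middle[OF assms(1)]
  by (auto simp: bbar_def)

end
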